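(* Let $\{(\phi^n,\mu^n,R^n,\xi^n)\}$ be generated by Scheme 2B and set $M:=R^0=\sqrt{E[\phi_{in}]}$. Then for all $n\ge0$: $0<R^{n+1}\le R^n\le M$, $0<\xi^{n+1}\le\frac{M}{\sqrt{c_0}}$, and $|\hat\xi^n|\le\frac{3M}{\sqrt{c_0}}$.
   Context: Standing setup: $\Omega\subset\mathbb{R}^d$ ($d=2,3$) is a bounded domain with smooth boundary and outward unit normal $\mathbf{n}$; $\|\cdot\|_0$ is the $L^2(\Omega)$ norm. Let $\lambda\ge 0$, $H(s)=\frac14(s^2-1)^2$, $h(s)=H'(s)=s^3-s$. Fix $c_0>0$ and define $E[\phi]=\int_\Omega\big(\tfrac12|\nabla\phi|^2+\tfrac{\lambda}{2}\phi^2+H(\phi)\big)dx+c_0$ (so $E[\phi]\ge c_0$). Time step $\Delta t>0$. Set $\phi^0=\phi_{in}$, $\mu^0=-\Delta\phi^0+\lambda\phi^0+h(\phi^0)$, $R^0=\sqrt{E[\phi^0]}$, $\phi^{-1}=\phi^0$, $R^{-1}=R^0$. Write $\bar\phi^n=2\phi^n-\phi^{n-1}$, $\bar R^n=2R^n-R^{n-1}$, $\hat\xi^n=\bar R^n/\sqrt{E[\bar\phi^n]}$, $\tilde\phi^{n+1/2}=\frac32\phi^n-\frac12\phi^{n-1}$, $\mu^{n+1/2}=\frac12(\mu^{n+1}+\mu^n)$. Scheme 2B: for $n\ge0$, solve $\frac{3\phi^{n+1}-4\phi^n+\phi^{n-1}}{2\Delta t}=\Delta\mu^{n+1}$, $\mu^{n+1}=-\Delta\phi^{n+1}+\lambda\phi^{n+1}+|\hat\xi^n|^2h(\bar\phi^n)$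 with $\nabla\phi^{n+1}\cdot\mathbf{n}=\nabla\mu^{n+1}\cdot\mathbf{n}=0$ on $\partial\Omega$; then $\frac{R^{n+1}-R^n}{\Delta t}=-\frac{\xi^{n+1}}{2\sqrt{E[\tilde\phi^{n+1/2}]}}\int_\Omega|\nabla\mu^{n+1/2}|^2dx$ with $\xi^{n+1}=R^{n+1}/\sqrt{E[\phi^{n+1}]}$. *)

theory Defs
  imports "HOL-Analysis.Analysis"
begin

definition pd :: "'d::finite \<Rightarrow> (real^'d \<Rightarrow> real) \<Rightarrow> real^'d \<Rightarrow> real" where
  "pd i f x = deriv (\<lambda>t. f (x + t *\<^sub>R axis i 1)) 0"

fun iter_pd :: "'d::finite list \<Rightarrow> (real^'d \<Rightarrow> real) \<Rightarrow> real^'d \<Rightarrow> real" where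
  "iter_pd [] f = f"
| "iter_pd (i # is) f = pd i (iter_pd is f)"

definition Ck_on :: "nat \<Rightarrow> (real^'d::finite) set \<Rightarrow> (real^'d \<Rightarrow> real) \<Rightarrow> bool" where
  "Ck_on k U f \<longleftrightarrow> open U \<and>
     (\<forall>is. length is \<le> k \<longrightarrow> continuous_on U (iter_pd is f)) \<and>
     (\<forall>is. length is < k \<longrightarrow> (\<forall>x\<in>U. \<forall>i. (\<lambda>t. iter_pd is f (x + t *\<^sub>R axis i 1)) differentiable (at 0)))"

definition smooth_on :: "(real^'d::finite) set \<Rightarrow> (real^'d \<Rightarrow> real) \<Rightarrow> bool" where
  "smooth_on U f \<longleftrightarrow> (\<forall>k. Ck_on k U f)"

definition grad :: "(real^'d::finite \<Rightarrow> real) \<Rightarrow> real^'d \<Rightarrow> real^'d" where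
  "grad f x = (\<chi> i. pd i f x)"

definition laplacian :: "(real^'d::finite \<Rightarrow> real) \<Rightarrow> real^'d \<Rightarrow> real" where
  "laplacian f x = (\<Sum>i\<in>UNIV. pd i (pd i f) x)"

definition smooth_bounded_domain :: "(real^'d::finite) set \<Rightarrow> (real^'d \<Rightarrow> real^'d) \<Rightarrow> bool" where
  "smooth_bounded_domain \<Omega> nrm \<longleftrightarrow> open \<Omega> \<and> connected \<Omega> \<and> bounded \<Omega> \<and> \<Omega> \<noteq> {} \<and>
     (\<exists>\<rho>. smooth_on UNIV \<rho> \<and> \<Omega> = {x. \<rho> x < 0} \<and> frontier \<Omega> = {x. \<rho> x = 0} \<and>
          (\<forall>x\<in>frontier \<Omega>. grad \<rho> x \<noteq> 0 \<and> nrm x = (1 / norm (grad \<rho> x)) *\<^sub>R grad \<rho> x))"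

definition H :: "real \<Rightarrow> real" where "H s = (s^2 - 1)^2 / 4"
definition h :: "real \<Rightarrow> real" where "h s = s^3 - s"

definition energy :: "(real^'d::finite) set \<Rightarrow> real \<Rightarrow> real \<Rightarrow> (real^'d \<Rightarrow> real) \<Rightarrow> real" where
  "energy \<Omega> lam c0 \<phi> =
     integral \<Omega> (\<lambda>x. (norm (grad \<phi> x))^2 / 2 + lam / 2 * (\<phi> x)^2 + H (\<phi> x)) + c0"

(* previous time level with the convention f^{-1} = f^0 *)
definition prev :: "(nat \<Rightarrow> 'a) \<Rightarrow> nat \<Rightarrow> 'a" where
  "prev f n = (case n of 0 \<Rightarrow> f 0 | Suc m \<Rightarrow> f m)"

end

theory Submission
  imports Defs
begin

text \<open>The update for
  \<open>R\<close> reads \<open>R\<^sup>n\<^sup>+\<^sup>1 (1 + a) = R\<^sup>n\<close> with \<open>a \<ge> 0\<close>, since \<open>\<xi>\<^sup>n\<^sup>+\<^sup>1\<close> is a positive multiple of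
  \<open>R\<^sup>n\<^sup>+\<^sup>1\<close> and the dissipation integral is nonnegative; hence \<open>R\<^sup>n\<close> stays positive and
  decreases from \<open>M = R\<^sup>0\<close>. Every energy is at least \<open>c\<^sub>0\<close>, so dividing by its square root
  costs at most a factor \<open>1 / \<surd>c\<^sub>0\<close>, and \<open>|2R\<^sup>n - R\<^sup>n\<^sup>-\<^sup>1| \<le> 3M\<close>.\<close>

lemma integral_nonneg_of_nonneg:
  fixes f :: "'a::euclidean_space \<Rightarrow> real"
  assumes "\<And>x. x \<in> S \<Longrightarrow> 0 \<le> f x"
  shows "0 \<le> integral S f"
proof (cases "f integrable_on S")
  case True
  then show ?thesis using assms by (rule integral_nonneg)
next
  case False
  then show ?thesis by (simp add: not_integrable_integral)
qed

lemma energy_ge_c0: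
  assumes "lam \<ge> 0"
  shows "c0 \<le> energy \<Omega> lam c0 \<phi>"
proof -
  have "0 \<le> integral \<Omega> (\<lambda>x. (norm (grad \<phi> x))^2 / 2 + lam / 2 * (\<phi> x)^2 + H (\<phi> x))"
    using assms by (intro integral_nonneg_of_nonneg) (simp add: H_def)
  then show ?thesis unfolding energy_def by simp
qed

lemma abs_divide_sqrt_le:
  fixes r B E c :: real
  assumes "\<bar>r\<bar> \<le> B" and "0 < c" and "c \<le> E"
  shows "\<bar>r / sqrt E\<bar> \<le> B / sqrt c"
proof -
  have "0 < sqrt c" "sqrt c \<le> sqrt E" using assms by auto
  then have "\<bar>r\<bar> / sqrt E \<le> \<bar>r\<bar> / sqrt c"
    by (intro divide_left_mono) auto
  also have "\<dots> \<le> B / sqrt c" using assms \<open>0 < sqrt c\<close> by (simp add: divide_right_mono)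
  finally show ?thesis using \<open>0 < sqrt c\<close> \<open>sqrt c \<le> sqrt E\<close> by (simp add: abs_divide)
qed

lemma implicit_relaxation_step:
  fixes dt e s I x y :: real
  assumes "0 < dt" "0 < e" "0 < s" "0 \<le> I" "0 < x"
    and step: "(y - x) / dt = - (y / e) / (2 * s) * I"
  shows "0 < y \<and> y \<le> x"
proof -
  define a where "a = dt * I / (2 * e * s)"
  have "0 \<le> a" using assms by (simp add: a_def)
  have "y - x = - y * a" using step assms by (simp add: a_def field_simps)
  then have x_eq: "x = y * (1 + a)" by (simp add: algebra_simps)
  have "0 < y"
  proof (rule ccontr)
    assume "\<not> 0 < y"
    then have "y * (1 + a) \<le> 0" using \<open>0 \<le> a\<close> by (simp add: mult_nonpos_nonneg)
    then show False using x_eq \<open>0 < x\<close> by simp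
  qed
  moreover have "y \<le> y * (1 + a)" using \<open>0 < y\<close> \<open>0 \<le> a\<close> by simp
  ultimately show ?thesis using x_eq by simp
qed

theorem mainTheorem16:
  fixes \<Omega> :: "(real^'d::finite) set" and nrm :: "real^'d \<Rightarrow> real^'d"
    and lam c0 dt :: real and phi_in :: "real^'d \<Rightarrow> real"
    and phi mu :: "nat \<Rightarrow> real^'d \<Rightarrow> real" and R xi :: "nat \<Rightarrow> real"
  defines "E \<equiv> energy \<Omega> lam c0"
  defines "phibar \<equiv> (\<lambda>n x. 2 * phi n x - prev phi n x)"
  defines "Rbar \<equiv> (\<lambda>n. 2 * R n - prev R n)"
  defines "xihat \<equiv> (\<lambda>n. Rbar n / sqrt (E (phibar n)))"
  defines "phitilde \<equiv> (\<lambda>n x. 3/2 * phi n x - 1/2 * prev phi n x)"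
  defines "muhalf \<equiv> (\<lambda>n x. (mu (Suc n) x + mu n x) / 2)"
  defines "M \<equiv> R 0"
  assumes dim: "CARD('d) = 2 \<or> CARD('d) = 3"
    and dom: "smooth_bounded_domain \<Omega> nrm"
    and lam: "lam \<ge> 0" and c0: "c0 > 0" and dt: "dt > 0"
    and reg: "\<And>n. \<exists>U. closure \<Omega> \<subseteq> U \<and> Ck_on 2 U (phi n) \<and> Ck_on 2 U (mu n)"
    and init_phi: "phi 0 = phi_in"
    and init_mu: "\<And>x. x \<in> \<Omega> \<Longrightarrow>
       mu 0 x = - laplacian (phi 0) x + lam * phi 0 x + h (phi 0 x)"
    and init_R: "R 0 = sqrt (E phi_in)"
    and eq1: "\<And>n x. x \<in> \<Omega> \<Longrightarrow>
       (3 * phi (Suc n) x - 4 * phi n x + prev phi n x) / (2 * dt) = laplacian (mu (Suc n)) x"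
    and eq2: "\<And>n x. x \<in> \<Omega> \<Longrightarrow>
       mu (Suc n) x = - laplacian (phi (Suc n)) x + lam * phi (Suc n) x
                      + (xihat n)^2 * h (phibar n x)"
    and bc: "\<And>n x. x \<in> frontier \<Omega> \<Longrightarrow>
       grad (phi (Suc n)) x \<bullet> nrm x = 0 \<and> grad (mu (Suc n)) x \<bullet> nrm x = 0"
    and eqR: "\<And>n. (R (Suc n) - R n) / dt =
       - xi (Suc n) / (2 * sqrt (E (phitilde n))) * integral \<Omega> (\<lambda>x. (norm (grad (muhalf n) x))^2)"
    and defxi: "\<And>n. xi (Suc n) = R (Suc n) / sqrt (E (phi (Suc n)))"
  shows "\<forall>n. 0 < R (Suc n) \<and> R (Suc n) \<le> R n \<and> R n \<le> M
           \<and> 0 < xi (Suc n) \<and> xi (Suc n) \<le> M / sqrt c0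
           \<and> \<bar>xihat n\<bar> \<le> 3 * M / sqrt c0"
proof -
  have E_ge: "c0 \<le> E f" for f unfolding E_def using lam by (rule energy_ge_c0)
  have sqrt_E_pos: "0 < sqrt (E f)" for f using E_ge[of f] c0 by simp
  have step: "0 < R (Suc n) \<and> R (Suc n) \<le> R n" if "0 < R n" for n
    by (rule implicit_relaxation_step[OF dt sqrt_E_pos sqrt_E_pos
          integral_nonneg_of_nonneg[OF zero_le_power2] that eqR[of n, unfolded defxi]])
  have R_bounds: "0 < R n \<and> R n \<le> M" for n
  proof (induction n)
    case 0
    then show ?case using init_R sqrt_E_pos by (simp add: M_def)
  next
    case (Suc n)
    then show ?case using step[of n] by auto
  qed
  have "0 < xi (Suc n) \<and> xi (Suc n) \<le> M / sqrt c0" for n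
    using R_bounds[of "Suc n"] abs_divide_sqrt_le[OF _ c0 E_ge, of "R (Suc n)" M "phi (Suc n)"]
      sqrt_E_pos[of "phi (Suc n)"] by (simp add: defxi)
  moreover have "\<bar>xihat n\<bar> \<le> 3 * M / sqrt c0" for n
  proof -
    have "0 < prev R n \<and> prev R n \<le> M" using R_bounds by (cases n) (auto simp: prev_def)
    then have "\<bar>Rbar n\<bar> \<le> 3 * M" using R_bounds[of n] by (simp add: Rbar_def abs_le_iff)
    then show ?thesis unfolding xihat_def using c0 E_ge by (rule abs_divide_sqrt_le)
  qed
  ultimately show ?thesis using step R_bounds by blast
qed

end
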